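(* Let $\mathbf{x}\in\mathbb{R}^3\setminus\mathbb{I}$ lie outside the region enclosed by $\mathcal{M}$, and suppose its dispersed projection $\mathbf{s}$ lies in the relative interior of a face $T=(\mathbf{v}_1,\mathbf{v}_2,\mathbf{v}_3)$ of $\mathcal{M}$, with barycentric coordinates $(\alpha_1,\alpha_2,\alpha_3)$ with respect to $T$ (so $\mathbf{s}=\mathbf{s}_T$ is obtained by barycentric interpolated projection with orientation $\sigma=+1$). Let $l=\langle \mathbf{x}-\mathbf{v}_1,\mathbf{n}_T\rangle$ be the distance from $\mathbf{x}$ to the plane of $T$, and let $\mathbf{a}_i=\hat{\mathbf{n}}^{T,+}_i/\langle \hat{\mathbf{n}}^{T,+}_i,\mathbf{n}_T\rangle$. Then $$\mathbf{x}-\mathbf{s}=l\sum_{i=1}^3\alpha_i\,\mathbf{a}_i .$$ Consequently $\mathbf{x}-\mathbf{s}=c\,\mathbf{n}_{\mathbf{s}}$ with $c=\|\mathbf{x}-\mathbf{s}\|>0$, where $\mathbf{n}_{\mathbf{s}}=\mathbf{w}/\|\mathbf{w}\|$, $\mathbf{w}=\sum_i\alpha_i\mathbf{a}_i\neq 0$, is a unit vector depending only on $T$ (with its aligned vertex normals) and the barycentric coordinates of $\mathbf{s}$, and not otherwise on $\mathbf{x}$.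
   Context: Let $\mathcal{M}$ be a triangle mesh in $\mathbb{R}^3$ that is watertight (closed, without self-intersections) and has no faces of zero area. Each face $T=(\mathbf{v}_1,\mathbf{v}_2,\mathbf{v}_3)$ has an outward unit face normal $\mathbf{n}_T$; each vertex $\mathbf{v}$ has a unit vertex normal $\mathbf{n}_{\mathbf{v}}$, and for every face $T$ and every vertex $\mathbf{v}$ of $T$, $\langle \mathbf{n}_{\mathbf{v}},\mathbf{n}_T\rangle>0$. Vertex normal alignment of a face $T$ with orientation $\sigma\in\{+1,-1\}$: put $\mathbf{m}_T=\sigma\mathbf{n}_T$; for each $i\in\{1,2,3\}$ let $j,k$ be the other two indices, $\mathbf{e}_1=\mathbf{v}_j-\mathbf{v}_i$, $\mathbf{e}_2=\mathbf{v}_k-\mathbf{v}_i$, $\mathbf{m}_i=\sigma\mathbf{n}_{\mathbf{v}_i}$, write the in-plane part $\mathbf{m}_i-\langle\mathbf{m}_i,\mathbf{m}_T\rangle\mathbf{m}_T=c_1\mathbf{e}_1+c_2\mathbf{e}_2$, and define the aligned normal $\hat{\mathbf{n}}^{T,\sigma}_i=(\mathbf{m}_i-\max(0,c_1)\mathbf{e}_1-\max(0,c_2)\mathbf{e}_2)/\|\mathbf{m}_i-\max(0,c_1)\mathbf{e}_1-\max(0,c_2)\mathbf{e}_2\|$. (Aligned normals depend on the face $T$, not only on the vertex.) Barycentric interpolated projection onto $T$ with orientation $\sigma$: for $\mathbf{x}$ with $l:=\langle\mathbf{x}-\mathbf{v}_1,\sigma\mathbf{n}_T\rangle\ge 0$,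 set $\mathbf{v}_i'=\mathbf{v}_i+\big(l/\langle\hat{\mathbf{n}}^{T,\sigma}_i,\sigma\mathbf{n}_T\rangle\big)\hat{\mathbf{n}}^{T,\sigma}_i$, forming the parallel triangle $T'=(\mathbf{v}_1',\mathbf{v}_2',\mathbf{v}_3')$ in the plane through $\mathbf{x}$ parallel to $T$. If $\mathbf{x}\in T'$, i.e. $\mathbf{x}=\sum_i\alpha_i\mathbf{v}_i'$ with $\alpha_i\ge0$, $\sum_i\alpha_i=1$, the projection is $\mathbf{s}_T=\sum_i\alpha_i\mathbf{v}_i$. Dispersed projection of $\mathbf{x}$ (with $\sigma=+1$ if $\mathbf{x}$ is outside the region enclosed by $\mathcal{M}$ and $\sigma=-1$ if inside): (1) compute the nearest point $\tilde{\mathbf{s}}$ of $\mathcal{M}$ to $\mathbf{x}$; (2) let $\mathcal{T}$ be the set of faces containing $\tilde{\mathbf{s}}$; (3) apply vertex normal alignment with orientation $\sigma$ to each $T\in\mathcal{T}$; (4) discard those $T$ with $\mathbf{x}\notin T'$; (5) compute $\mathbf{s}_T$ for the remaining $T$; (6) let $\mathbf{s}$ be the $\mathbf{s}_T$ nearest to $\mathbf{x}$. It is assumed that for every $\mathbf{x}\in\mathbb{R}^3$ at least one face survives step (4), so $\mathbf{s}$ is defined. Exceptional set: for a face $T$, orientation $\sigma$, and $\mathbf{a}^{T,\sigma}_i=\hat{\mathbf{n}}^{T,\sigma}_i/\langle\hat{\mathbf{n}}^{T,\sigma}_i,\sigma\mathbf{n}_T\rangle$, let $\mathbb{I}$ be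 the union over all faces $T$, both $\sigma$, and all pairs of distinct vertices $\mathbf{v}_i,\mathbf{v}_j$ of $T$ of the bilinear surfaces $\{(1-u)\mathbf{v}_i+u\mathbf{v}_j+t((1-u)\mathbf{a}^{T,\sigma}_i+u\mathbf{a}^{T,\sigma}_j): u\in[0,1],t\ge0\}$ (a set of Lebesgue measure zero). *)

theory Defs
  imports "HOL-Analysis.Analysis"
begin

type_synonym point = "real^3"
type_synonym face = "point \<times> point \<times> point"

text \<open>Vertex i (i = 1,2,3) of a face; indices outside 1..3 default to the third vertex.\<close>
definition vtx :: "face \<Rightarrow> nat \<Rightarrow> point" where
  "vtx T i = (case T of (a, b, c) \<Rightarrow> if i = 1 then a else if i = 2 then b else c)"

definition nxt :: "nat \<Rightarrow> nat" where
  "nxt i = (if i = 3 then 1 else i + 1)"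

definition verts :: "face \<Rightarrow> point set" where
  "verts T = {vtx T 1, vtx T 2, vtx T 3}"

definition tri :: "face \<Rightarrow> point set" where
  "tri T = convex hull (verts T)"

definition msurf :: "face set \<Rightarrow> point set" where
  "msurf F = (\<Union>T\<in>F. tri T)"

text \<open>Watertight: closed (every edge of every face is shared by exactly two faces) and
  without self-intersections (two distinct faces meet exactly in the hull of their common
  vertices).\<close>
definition watertight :: "face set \<Rightarrow> bool" where
  "watertight F \<longleftrightarrow> finite F \<and> F \<noteq> {} \<and>
     (\<forall>T\<in>F. \<forall>i\<in>{1,2,3::nat}.
        card {T'\<in>F. {vtx T i, vtx T (nxt i)} \<subseteq> verts T'} = 2) \<and>
     (\<forall>T\<in>F. \<forall>T'\<in>F. T \<noteq> T' \<longrightarrow> tri T \<inter> tri T' = convex hull (verts T \<inter> verts T'))"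

definition nondegenerate :: "face set \<Rightarrow> bool" where
  "nondegenerate F \<longleftrightarrow> (\<forall>T\<in>F. \<not> collinear (verts T))"

definition outward_face_normals :: "face set \<Rightarrow> (face \<Rightarrow> point) \<Rightarrow> bool" where
  "outward_face_normals F nf \<longleftrightarrow> (\<forall>T\<in>F.
     norm (nf T) = 1 \<and>
     nf T \<bullet> (vtx T 2 - vtx T 1) = 0 \<and> nf T \<bullet> (vtx T 3 - vtx T 1) = 0 \<and>
     (\<forall>p\<in>rel_interior (tri T). \<exists>\<epsilon>>0. \<forall>t. 0 < t \<and> t < \<epsilon> \<longrightarrow>
        p + t *\<^sub>R nf T \<in> outside (msurf F) \<and> p - t *\<^sub>R nf T \<in> inside (msurf F)))"

definition good_vertex_normals :: "face set \<Rightarrow> (face \<Rightarrow> point) \<Rightarrow> (point \<Rightarrow> point) \<Rightarrow> bool" where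
  "good_vertex_normals F nf nv \<longleftrightarrow>
     (\<forall>T\<in>F. \<forall>v\<in>verts T. norm (nv v) = 1 \<and> nv v \<bullet> nf T > 0)"

definition inplane_coeffs :: "point \<Rightarrow> point \<Rightarrow> point \<Rightarrow> real \<times> real" where
  "inplane_coeffs e1 e2 p = (THE c. p = fst c *\<^sub>R e1 + snd c *\<^sub>R e2)"

definition aligned_normal ::
  "(face \<Rightarrow> point) \<Rightarrow> (point \<Rightarrow> point) \<Rightarrow> real \<Rightarrow> face \<Rightarrow> nat \<Rightarrow> point" where
  "aligned_normal nf nv \<sigma> T i =
     (let mT = \<sigma> *\<^sub>R nf T;
          vi = vtx T i;
          e1 = vtx T (nxt i) - vi;
          e2 = vtx T (nxt (nxt i)) - vi;
          m = \<sigma> *\<^sub>R nv vi;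
          c = inplane_coeffs e1 e2 (m - (m \<bullet> mT) *\<^sub>R mT);
          u = m - max 0 (fst c) *\<^sub>R e1 - max 0 (snd c) *\<^sub>R e2
      in u /\<^sub>R norm u)"

definition avec ::
  "(face \<Rightarrow> point) \<Rightarrow> (point \<Rightarrow> point) \<Rightarrow> real \<Rightarrow> face \<Rightarrow> nat \<Rightarrow> point" where
  "avec nf nv \<sigma> T i =
     aligned_normal nf nv \<sigma> T i /\<^sub>R (aligned_normal nf nv \<sigma> T i \<bullet> (\<sigma> *\<^sub>R nf T))"

definition offset :: "(face \<Rightarrow> point) \<Rightarrow> real \<Rightarrow> face \<Rightarrow> point \<Rightarrow> real" where
  "offset nf \<sigma> T x = (x - vtx T 1) \<bullet> (\<sigma> *\<^sub>R nf T)"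

text \<open>Barycentric interpolated projection: s is a projection of x onto T with orientation \<sigma>,
  i.e. l \<ge> 0, x lies in the parallel triangle T' with barycentric coordinates \<alpha>, and
  s = \<Sum> \<alpha>_i v_i.  (Step (4) "x \<in> T'" holds iff such an s exists.)\<close>
definition bip ::
  "(face \<Rightarrow> point) \<Rightarrow> (point \<Rightarrow> point) \<Rightarrow> real \<Rightarrow> face \<Rightarrow> point \<Rightarrow> point \<Rightarrow> bool" where
  "bip nf nv \<sigma> T x s \<longleftrightarrow> offset nf \<sigma> T x \<ge> 0 \<and>
     (\<exists>\<alpha> :: nat \<Rightarrow> real. (\<forall>i\<in>{1,2,3}. \<alpha> i \<ge> 0) \<and> (\<Sum>i\<in>{1,2,3}. \<alpha> i) = 1 \<and>
        x = (\<Sum>i\<in>{1,2,3}. \<alpha> i *\<^sub>R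
               (vtx T i + offset nf \<sigma> T x *\<^sub>R avec nf nv \<sigma> T i)) \<and>
        s = (\<Sum>i\<in>{1,2,3}. \<alpha> i *\<^sub>R vtx T i))"

definition orient :: "face set \<Rightarrow> point \<Rightarrow> real" where
  "orient F x = (if x \<in> inside (msurf F) then -1 else 1)"

definition nearest_point :: "face set \<Rightarrow> point \<Rightarrow> point \<Rightarrow> bool" where
  "nearest_point F x p \<longleftrightarrow> p \<in> msurf F \<and> (\<forall>y\<in>msurf F. dist x p \<le> dist x y)"

text \<open>s is a dispersed projection of x (for some choice of nearest point, ties allowed).\<close>
definition dispersed_proj ::
  "face set \<Rightarrow> (face \<Rightarrow> point) \<Rightarrow> (point \<Rightarrow> point) \<Rightarrow> point \<Rightarrow> point \<Rightarrow> bool" where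
  "dispersed_proj F nf nv x s \<longleftrightarrow> (\<exists>p. nearest_point F x p \<and>
     (\<exists>T\<in>F. p \<in> tri T \<and> bip nf nv (orient F x) T x s) \<and>
     (\<forall>T\<in>F. \<forall>s'. p \<in> tri T \<and> bip nf nv (orient F x) T x s' \<longrightarrow> dist x s \<le> dist x s'))"

text \<open>Standing assumption: for every x and every nearest point, some face survives step (4).\<close>
definition dispersed_proj_defined ::
  "face set \<Rightarrow> (face \<Rightarrow> point) \<Rightarrow> (point \<Rightarrow> point) \<Rightarrow> bool" where
  "dispersed_proj_defined F nf nv \<longleftrightarrow> (\<forall>x p. nearest_point F x p \<longrightarrow>
     (\<exists>T\<in>F. p \<in> tri T \<and> (\<exists>s. bip nf nv (orient F x) T x s)))"

definition exceptional_set ::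
  "face set \<Rightarrow> (face \<Rightarrow> point) \<Rightarrow> (point \<Rightarrow> point) \<Rightarrow> point set" where
  "exceptional_set F nf nv = (\<Union>T\<in>F. \<Union>\<sigma>\<in>{1, -1}. \<Union>i\<in>{1,2,3}. \<Union>j\<in>{1,2,3}.
     if vtx T i = vtx T j then {} else
     {(1 - u) *\<^sub>R vtx T i + u *\<^sub>R vtx T j +
        t *\<^sub>R ((1 - u) *\<^sub>R avec nf nv \<sigma> T i + u *\<^sub>R avec nf nv \<sigma> T j) |
      u t. 0 \<le> u \<and> u \<le> 1 \<and> t \<ge> 0})"

end

theory Submission
  imports Defs "HOL-Analysis.Cross3"
begin

text \<open>
  By construction of the parallel triangle, whose vertices are \<open>v\<^sub>i + l a\<^sub>i\<close>, a barycentric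
  interpolated projection \<open>s\<close> of \<open>x\<close> onto a face with weights \<open>\<alpha>\<close> satisfies
  \<open>x - s = l \<Sum> \<alpha>\<^sub>i a\<^sub>i\<close>. The dispersed projection, however, may come from another face \<open>T\<^sub>0\<close>
  through the nearest point. Since \<open>s\<close> lies in the relative interior of \<open>T\<close> and distinct faces
  only meet in the hull of their common vertices, \<open>T\<^sub>0\<close> has the same vertices as \<open>T\<close>; both
  normals point outwards, so they coincide; the aligned normal at a vertex only depends on the
  face normal and on the unordered pair of edges leaving the vertex, so the vectors \<open>a\<^sub>i\<close> agree
  after relabelling; and the barycentric weights agree by affine independence. Finally \<open>x \<noteq> s\<close>
  because \<open>s\<close> lies on the mesh and \<open>x\<close> outside it, which forces \<open>l > 0\<close> and \<open>\<Sum> \<alpha>\<^sub>i a\<^sub>i \<noteq> 0\<close>.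
\<close>

unbundle cross3_syntax

lemma nonneg_scaleR_eq_norm_scaleR:
  fixes v w :: "'a::real_normed_vector"
  assumes "v = l *\<^sub>R w" "0 \<le> l" "v \<noteq> 0"
  shows "w \<noteq> 0 \<and> v = norm v *\<^sub>R (w /\<^sub>R norm w)"
proof -
  have "w \<noteq> 0" "l > 0" using assms by auto
  then show ?thesis using assms(1) by simp
qed

lemma sum_reindex_weights:
  fixes f :: "'a \<Rightarrow> 'b::real_vector"
  assumes "bij_betw \<pi> A A"
  shows "(\<Sum>j\<in>A. (\<beta> \<circ> the_inv_into A \<pi>) j *\<^sub>R f j) = (\<Sum>i\<in>A. \<beta> i *\<^sub>R f (\<pi> i))"
proof -
  have "(\<Sum>j\<in>A. (\<beta> \<circ> the_inv_into A \<pi>) j *\<^sub>R f j) =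
      (\<Sum>i\<in>A. (\<beta> \<circ> the_inv_into A \<pi>) (\<pi> i) *\<^sub>R f (\<pi> i))"
    using sum.reindex_bij_betw[OF assms] by (rule sym)
  also have "\<dots> = (\<Sum>i\<in>A. \<beta> i *\<^sub>R f (\<pi> i))"
    using assms by (intro sum.cong) (auto simp: bij_betw_def the_inv_into_f_f)
  finally show ?thesis .
qed

lemma rel_interior_simplex_not_in_facet:
  fixes V :: "'a::euclidean_space set"
  assumes "\<not> affine_dependent V" "v \<in> V" "y \<in> rel_interior (convex hull V)"
  shows "y \<notin> convex hull (V - {v})"
proof
  assume y: "y \<in> convex hull (V - {v})"
  have face: "convex hull (V - {v}) face_of convex hull V"
    by (subst face_of_convex_hull_affine_independent[OF assms(1)]) blast
  have proper: "convex hull (V - {v}) \<noteq> convex hull V"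
  proof
    assume "convex hull (V - {v}) = convex hull V"
    then have "v \<in> affine hull (V - {v})"
      by (metis assms(2) hull_inc convex_hull_subset_affine_hull subsetD)
    then show False using assms(1,2) unfolding affine_dependent_def by blast
  qed
  show False using face_of_disjoint_rel_interior[OF face proper] y assms(3) by blast
qed

lemma cross3_frame_decomposition:
  fixes p e1 e2 :: "real^3"
  shows "((e1 \<times> e2) \<bullet> (e1 \<times> e2)) *\<^sub>R p =
    ((p \<times> e2) \<bullet> (e1 \<times> e2)) *\<^sub>R e1 + ((e1 \<times> p) \<bullet> (e1 \<times> e2)) *\<^sub>R e2
    + (p \<bullet> (e1 \<times> e2)) *\<^sub>R (e1 \<times> e2)"
  unfolding cross3_def inner_vec_def sum_3 vec_eq_iff forall_3 vector_def
  by (simp add: algebra_simps)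

lemma orthogonal_imp_parallel_cross:
  fixes n e1 e2 :: "real^3"
  assumes "n \<bullet> e1 = 0" "n \<bullet> e2 = 0"
  shows "((e1 \<times> e2) \<bullet> (e1 \<times> e2)) *\<^sub>R n = (n \<bullet> (e1 \<times> e2)) *\<^sub>R (e1 \<times> e2)"
proof -
  have "n \<times> (e1 \<times> e2) = 0" using assms by (simp add: Lagrange inner_commute)
  with Lagrange[of "e1 \<times> e2" n "e1 \<times> e2"] show ?thesis by (simp add: inner_commute)
qed

lemma cross_nonzero_coeffs_eq:
  fixes e1 e2 :: "real^3"
  assumes "e1 \<times> e2 \<noteq> 0" and "a *\<^sub>R e1 + b *\<^sub>R e2 = c *\<^sub>R e1 + d *\<^sub>R e2"
  shows "a = c \<and> b = d"
proof -
  have "(a *\<^sub>R e1 + b *\<^sub>R e2) \<times> e2 = (c *\<^sub>R e1 + d *\<^sub>R e2) \<times> e2"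
    and "e1 \<times> (a *\<^sub>R e1 + b *\<^sub>R e2) = e1 \<times> (c *\<^sub>R e1 + d *\<^sub>R e2)"
    using assms(2) by simp_all
  then have "a *\<^sub>R (e1 \<times> e2) = c *\<^sub>R (e1 \<times> e2)" "b *\<^sub>R (e1 \<times> e2) = d *\<^sub>R (e1 \<times> e2)"
    by (simp_all add: cross_add_left cross_add_right cross_mult_left cross_mult_right)
  then show ?thesis using assms(1) by simp
qed

lemma inplane_coeffs_ex1:
  fixes p e1 e2 :: "real^3"
  assumes "e1 \<times> e2 \<noteq> 0" and "p \<bullet> (e1 \<times> e2) = 0"
  shows "\<exists>!c. p = fst c *\<^sub>R e1 + snd c *\<^sub>R e2"
proof (rule ex_ex1I)
  let ?N = "e1 \<times> e2"
  have "?N \<bullet> ?N \<noteq> 0" using assms(1) by simp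
  then have "p = (1 / (?N \<bullet> ?N)) *\<^sub>R ((?N \<bullet> ?N) *\<^sub>R p)" by simp
  also have "\<dots> = ((p \<times> e2) \<bullet> ?N / (?N \<bullet> ?N)) *\<^sub>R e1 + ((e1 \<times> p) \<bullet> ?N / (?N \<bullet> ?N)) *\<^sub>R e2"
    unfolding cross3_frame_decomposition assms(2) by (simp add: scaleR_add_right)
  finally show "\<exists>c. p = fst c *\<^sub>R e1 + snd c *\<^sub>R e2" by (metis fst_conv snd_conv)
next
  show "c = d" if "p = fst c *\<^sub>R e1 + snd c *\<^sub>R e2" "p = fst d *\<^sub>R e1 + snd d *\<^sub>R e2" for c d
    using cross_nonzero_coeffs_eq[OF assms(1), of "fst c" "snd c" "fst d" "snd d"] that
    by (simp add: prod_eq_iff)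
qed

lemma inplane_coeffs_swap:
  fixes p e1 e2 :: "real^3"
  assumes "e1 \<times> e2 \<noteq> 0" and "p \<bullet> (e1 \<times> e2) = 0"
  shows "inplane_coeffs e2 e1 p = prod.swap (inplane_coeffs e1 e2 p)"
proof -
  have "p = fst (inplane_coeffs e1 e2 p) *\<^sub>R e1 + snd (inplane_coeffs e1 e2 p) *\<^sub>R e2"
    unfolding inplane_coeffs_def using theI'[OF inplane_coeffs_ex1[OF assms]] .
  moreover have "\<exists>!c. p = fst c *\<^sub>R e2 + snd c *\<^sub>R e1"
    using inplane_coeffs_ex1[of e2 e1 p] assms by (metis cross_skew inner_minus_right neg_equal_0_iff_equal)
  ultimately show ?thesis
    unfolding inplane_coeffs_def[of e2 e1] by (intro the1_equality) (simp_all add: add.commute)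
qed

lemma orthogonal_cross_eq_scaleR:
  fixes n e1 e2 :: "real^3"
  assumes "e1 \<times> e2 \<noteq> 0" "n \<bullet> e1 = 0" "n \<bullet> e2 = 0"
  shows "n = (n \<bullet> (e1 \<times> e2) / ((e1 \<times> e2) \<bullet> (e1 \<times> e2))) *\<^sub>R (e1 \<times> e2)"
proof -
  let ?N = "e1 \<times> e2"
  have "?N \<bullet> ?N \<noteq> 0" using assms(1) by simp
  then have "n = (1 / (?N \<bullet> ?N)) *\<^sub>R ((?N \<bullet> ?N) *\<^sub>R n)" by simp
  then show ?thesis unfolding orthogonal_imp_parallel_cross[OF assms(2,3)] by simp
qed

lemma unit_normals_eq_or_opposite:
  fixes n n' e1 e2 :: "real^3"
  assumes "e1 \<times> e2 \<noteq> 0" and "norm n = 1" "n \<bullet> e1 = 0" "n \<bullet> e2 = 0"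
    and "norm n' = 1" "n' \<bullet> e1 = 0" "n' \<bullet> e2 = 0"
  shows "n' = n \<or> n' = - n"
proof -
  obtain k k' where k: "n = k *\<^sub>R (e1 \<times> e2)" and k': "n' = k' *\<^sub>R (e1 \<times> e2)"
    using orthogonal_cross_eq_scaleR assms by metis
  have "\<bar>k\<bar> * norm (e1 \<times> e2) = \<bar>k'\<bar> * norm (e1 \<times> e2)"
    using assms(2,5) k k' by simp
  then have "k' = k \<or> k' = - k" using assms(1) by (auto simp: abs_eq_iff)
  then show ?thesis using k k' by auto
qed

definition align_normal :: "point \<Rightarrow> point \<Rightarrow> point \<Rightarrow> point \<Rightarrow> point" where
  "align_normal n e1 e2 m =
     (let c = inplane_coeffs e1 e2 (m - (m \<bullet> n) *\<^sub>R n);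
          u = m - max 0 (fst c) *\<^sub>R e1 - max 0 (snd c) *\<^sub>R e2
      in u /\<^sub>R norm u)"

lemma aligned_normal_eq_align_normal:
  "aligned_normal nf nv \<sigma> T i =
     align_normal (\<sigma> *\<^sub>R nf T) (vtx T (nxt i) - vtx T i) (vtx T (nxt (nxt i)) - vtx T i)
       (\<sigma> *\<^sub>R nv (vtx T i))"
  by (simp add: aligned_normal_def align_normal_def Let_def)

lemma align_normal_swap:
  fixes n e1 e2 m :: point
  assumes "e1 \<times> e2 \<noteq> 0" "norm n = 1" "n \<bullet> e1 = 0" "n \<bullet> e2 = 0"
  shows "align_normal n e2 e1 m = align_normal n e1 e2 m"
proof -
  define p where "p = m - (m \<bullet> n) *\<^sub>R n"
  have "n \<bullet> n = 1" using assms(2) by (simp add: norm_eq_1)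
  then have "p \<bullet> n = 0" by (simp add: p_def inner_diff_left)
  moreover obtain k where "n = k *\<^sub>R (e1 \<times> e2)" and "k \<noteq> 0"
    using orthogonal_cross_eq_scaleR[OF assms(1,3,4)] assms(2) by (metis norm_zero zero_neq_one scale_zero_left)
  ultimately have "p \<bullet> (e1 \<times> e2) = 0" by simp
  note swap = inplane_coeffs_swap[OF assms(1) this]
  show ?thesis
    unfolding align_normal_def Let_def p_def[symmetric] swap
    by (simp add: algebra_simps)
qed

lemma vtx_simps [simp]:
  "vtx (a, b, c) 1 = a" "vtx (a, b, c) (Suc 0) = a" "vtx (a, b, c) 2 = b" "vtx (a, b, c) 3 = c"
  by (simp_all add: vtx_def)

lemma nxt_simps [simp]: "nxt 1 = 2" "nxt (Suc 0) = 2" "nxt 2 = 3" "nxt 3 = 1"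
  by (simp_all add: nxt_def)

lemma verts_eq_image: "verts T = vtx T ` {1,2,3}"
  by (simp add: verts_def)

lemma verts_from_vertex:
  assumes "k \<in> {1,2,3}"
  shows "verts T = {vtx T k, vtx T (nxt k), vtx T (nxt (nxt k))}"
  using assms by (auto simp: verts_def)

lemma inj_on_vtx_if_not_collinear:
  assumes "\<not> collinear (verts T)"
  shows "inj_on (vtx T) {1,2,3}"
proof -
  obtain a b c where T: "T = (a, b, c)" by (cases T)
  have "a \<noteq> b" "a \<noteq> c" "b \<noteq> c"
    using assms unfolding T verts_def collinear_3_eq_affine_dependent by simp_all
  then show ?thesis by (auto simp: T inj_on_def)
qed

lemma verts_other_two:
  assumes "inj_on (vtx T) {1,2,3}" and "k \<in> {1,2,3}"
  shows "{vtx T (nxt k), vtx T (nxt (nxt k))} = verts T - {vtx T k}"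
  using assms by (auto simp: verts_def inj_on_def)

lemma affine_independent_verts:
  assumes "\<not> collinear (verts T)"
  shows "\<not> affine_dependent (verts T)"
  using assms affine_dependent_imp_collinear_3 by (auto simp: verts_def)

lemma card_verts:
  assumes "\<not> collinear (verts T)"
  shows "card (verts T) = 3"
  using card_image[OF inj_on_vtx_if_not_collinear[OF assms]] by (simp add: verts_eq_image)

lemma relabel_permutation:
  assumes "inj_on (vtx T) {1,2,3}" "inj_on (vtx T0) {1,2,3}" "verts T0 = verts T"
  obtains \<pi> where "bij_betw \<pi> {1,2,3} {1,2,3}" "\<forall>i\<in>{1,2,3}. vtx T0 i = vtx T (\<pi> i)"
proof
  have bij: "bij_betw (vtx S) {1,2,3} (verts S)" if "inj_on (vtx S) {1,2,3}" for S
    using that by (simp add: bij_betw_def verts_eq_image)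
  show "bij_betw (the_inv_into {1,2,3} (vtx T) \<circ> vtx T0) {1,2,3} {1,2,3}"
    using bij[OF assms(2)] bij_betw_the_inv_into[OF bij[OF assms(1)]] unfolding assms(3)
    by (rule bij_betw_trans)
  show "\<forall>i\<in>{1,2,3}. vtx T0 i = vtx T ((the_inv_into {1,2,3} (vtx T) \<circ> vtx T0) i)"
  proof
    fix i :: nat assume "i \<in> {1,2,3}"
    then have "vtx T0 i \<in> vtx T0 ` {1,2,3}" by (rule imageI)
    then have "vtx T0 i \<in> vtx T ` {1,2,3}" using assms(3) by (simp only: verts_eq_image)
    then show "vtx T0 i = vtx T ((the_inv_into {1,2,3} (vtx T) \<circ> vtx T0) i)"
      using f_the_inv_into_f[OF assms(1)] by simp
  qed
qed

lemma edges_cross_nonzero: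
  assumes "\<not> collinear (verts T)" and "k \<in> {1,2,3}"
  shows "(vtx T (nxt k) - vtx T k) \<times> (vtx T (nxt (nxt k)) - vtx T k) \<noteq> 0"
proof
  assume "(vtx T (nxt k) - vtx T k) \<times> (vtx T (nxt (nxt k)) - vtx T k) = 0"
  then have "collinear {vtx T (nxt k), vtx T k, vtx T (nxt (nxt k))}"
    by (simp add: cross_eq_0 collinear_3)
  then show False
    using assms verts_from_vertex[OF assms(2), of T] by (simp add: insert_commute)
qed

definition is_unit_normal :: "point \<Rightarrow> face \<Rightarrow> bool" where
  "is_unit_normal n T \<longleftrightarrow>
     norm n = 1 \<and> n \<bullet> (vtx T 2 - vtx T 1) = 0 \<and> n \<bullet> (vtx T 3 - vtx T 1) = 0"

lemma is_unit_normal_orthogonal_verts: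
  assumes "is_unit_normal n T" and "u \<in> verts T" "w \<in> verts T"
  shows "n \<bullet> (u - w) = 0"
proof -
  have "n \<bullet> v = n \<bullet> vtx T 1" if "v \<in> verts T" for v
    using assms(1) that by (auto simp: is_unit_normal_def verts_def inner_diff_right)
  then show ?thesis using assms(2,3) by (simp add: inner_diff_right)
qed

lemma avec_relabel:
  assumes T: "\<not> collinear (verts T)" and V: "verts T0 = verts T" and N: "nf T0 = nf T"
    and n: "is_unit_normal (nf T) T" and \<sigma>: "\<bar>\<sigma>\<bar> = 1"
    and i: "i \<in> {1,2,3}" and j: "j \<in> {1,2,3}" and ij: "vtx T0 i = vtx T j"
  shows "avec nf nv \<sigma> T0 i = avec nf nv \<sigma> T j"
proof -
  define e1 where "e1 = vtx T (nxt j) - vtx T j"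
  define e2 where "e2 = vtx T (nxt (nxt j)) - vtx T j"
  have "inj_on (vtx T0) {1,2,3}" using T V by (metis inj_on_vtx_if_not_collinear)
  then have "{vtx T0 (nxt i), vtx T0 (nxt (nxt i))} = {vtx T (nxt j), vtx T (nxt (nxt j))}"
    using verts_other_two[OF _ i] verts_other_two[OF inj_on_vtx_if_not_collinear[OF T] j] V ij
    by simp
  then consider "vtx T0 (nxt i) - vtx T0 i = e1" "vtx T0 (nxt (nxt i)) - vtx T0 i = e2"
    | "vtx T0 (nxt i) - vtx T0 i = e2" "vtx T0 (nxt (nxt i)) - vtx T0 i = e1"
    unfolding e1_def e2_def ij by (auto simp: doubleton_eq_iff)
  note cases = this
  have verts: "vtx T j \<in> verts T" "vtx T (nxt j) \<in> verts T" "vtx T (nxt (nxt j)) \<in> verts T"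
    using verts_from_vertex[OF j] by auto
  have "norm (\<sigma> *\<^sub>R nf T) = 1" "(\<sigma> *\<^sub>R nf T) \<bullet> e1 = 0" "(\<sigma> *\<^sub>R nf T) \<bullet> e2 = 0"
    using n \<sigma> unfolding e1_def e2_def
    by (auto simp: is_unit_normal_def intro!: is_unit_normal_orthogonal_verts verts)
  then have swap: "align_normal (\<sigma> *\<^sub>R nf T) e2 e1 m = align_normal (\<sigma> *\<^sub>R nf T) e1 e2 m" for m
    using align_normal_swap edges_cross_nonzero[OF T j] unfolding e1_def e2_def by blast
  have "aligned_normal nf nv \<sigma> T0 i = align_normal (\<sigma> *\<^sub>R nf T)
      (vtx T0 (nxt i) - vtx T0 i) (vtx T0 (nxt (nxt i)) - vtx T0 i) (\<sigma> *\<^sub>R nv (vtx T j))"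
    by (simp add: aligned_normal_eq_align_normal N ij)
  also have "\<dots> = align_normal (\<sigma> *\<^sub>R nf T) e1 e2 (\<sigma> *\<^sub>R nv (vtx T j))"
    using cases swap by cases simp_all
  also have "\<dots> = aligned_normal nf nv \<sigma> T j"
    by (simp add: aligned_normal_eq_align_normal e1_def e2_def)
  finally show ?thesis by (simp add: avec_def N)
qed

lemma barycentric_coords_unique:
  assumes "\<not> collinear (verts T)"
    and "sum \<alpha> {1,2,3} = 1" "sum \<gamma> {1,2,3} = 1"
    and "(\<Sum>i\<in>{1,2,3}. \<alpha> i *\<^sub>R vtx T i) = (\<Sum>i\<in>{1,2,3}. \<gamma> i *\<^sub>R vtx T i)"
    and "i \<in> {1,2,3}"
  shows "\<alpha> i = \<gamma> i"
proof -
  have affine: "(\<Sum>i\<in>{1,2,3}. \<delta> i *\<^sub>R vtx T i) =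
      vtx T 1 + \<delta> 2 *\<^sub>R (vtx T 2 - vtx T 1) + \<delta> 3 *\<^sub>R (vtx T 3 - vtx T 1)"
    if "sum \<delta> {1,2,3} = 1" for \<delta> :: "nat \<Rightarrow> real"
  proof -
    have \<delta>1: "\<delta> 1 = 1 - \<delta> 2 - \<delta> 3" using that by simp
    have "(\<Sum>i\<in>{1,2,3}. \<delta> i *\<^sub>R vtx T i) = \<delta> 1 *\<^sub>R vtx T 1 + \<delta> 2 *\<^sub>R vtx T 2 + \<delta> 3 *\<^sub>R vtx T 3"
      by (simp add: add.assoc)
    then show ?thesis unfolding \<delta>1 by (simp add: algebra_simps)
  qed
  have "(vtx T 2 - vtx T 1) \<times> (vtx T 3 - vtx T 1) \<noteq> 0"
    using edges_cross_nonzero[OF assms(1), of 1] by simp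
  then have "\<alpha> 2 = \<gamma> 2 \<and> \<alpha> 3 = \<gamma> 3"
    using assms(4) unfolding affine[OF assms(2)] affine[OF assms(3)]
    by (intro cross_nonzero_coeffs_eq) (simp_all add: add.assoc)
  moreover have "\<alpha> 1 = \<gamma> 1" using calculation assms(2,3) by simp
  ultimately show ?thesis using assms(5) by auto
qed

lemma bip_in_tri:
  assumes "bip nf nv \<sigma> T x s"
  shows "s \<in> tri T"
proof -
  obtain \<beta> where "\<forall>i\<in>{1,2,3}. \<beta> i \<ge> 0" "sum \<beta> {1,2,3} = 1"
    "s = (\<Sum>i\<in>{1,2,3}. \<beta> i *\<^sub>R vtx T i)"
    using assms unfolding bip_def by blast
  then have "s = \<beta> 1 *\<^sub>R vtx T 1 + \<beta> 2 *\<^sub>R vtx T 2 + \<beta> 3 *\<^sub>R vtx T 3"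
    "0 \<le> \<beta> 1" "0 \<le> \<beta> 2" "0 \<le> \<beta> 3" "\<beta> 1 + \<beta> 2 + \<beta> 3 = 1"
    by (simp_all add: add.assoc)
  then show ?thesis unfolding tri_def verts_def convex_hull_3 by blast
qed

lemma bip_relabel:
  assumes T: "\<not> collinear (verts T)" and V: "verts T0 = verts T" and N: "nf T0 = nf T"
    and n: "is_unit_normal (nf T) T" and \<sigma>: "\<bar>\<sigma>\<bar> = 1"
    and bip: "bip nf nv \<sigma> T0 x s"
  shows "bip nf nv \<sigma> T x s"
proof -
  have inj: "inj_on (vtx T) {1,2,3}" "inj_on (vtx T0) {1,2,3}"
    using T V by (metis inj_on_vtx_if_not_collinear)+
  obtain \<pi> where \<pi>: "bij_betw \<pi> {1,2,3} {1,2,3}" "\<forall>i\<in>{1,2,3}. vtx T0 i = vtx T (\<pi> i)"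
    using relabel_permutation[OF inj V] by blast
  define l where "l = offset nf \<sigma> T x"
  have "nf T \<bullet> (vtx T0 1 - vtx T 1) = 0"
    using n V by (intro is_unit_normal_orthogonal_verts) (auto simp: verts_def)
  then have l: "offset nf \<sigma> T0 x = l"
    by (simp add: l_def offset_def N inner_diff_right inner_diff_left inner_commute)
  obtain \<beta> where \<beta>: "l \<ge> 0" "\<forall>i\<in>{1,2,3}. \<beta> i \<ge> 0" "sum \<beta> {1,2,3} = 1"
    "x = (\<Sum>i\<in>{1,2,3}. \<beta> i *\<^sub>R (vtx T0 i + l *\<^sub>R avec nf nv \<sigma> T0 i))"
    "s = (\<Sum>i\<in>{1,2,3}. \<beta> i *\<^sub>R vtx T0 i)"
    using bip unfolding bip_def l by blast
  define \<beta>' where "\<beta>' = \<beta> \<circ> the_inv_into {1,2,3} \<pi>"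
  note reindex = sum_reindex_weights[OF \<pi>(1), of \<beta>, folded \<beta>'_def]
  have "sum \<beta>' {1,2,3} = 1"
    using reindex[of "\<lambda>_. 1 :: real"] \<beta>(3) by simp
  moreover have "\<forall>j\<in>{1,2,3}. \<beta>' j \<ge> 0"
    using \<beta>(2) bij_betw_apply[OF bij_betw_the_inv_into[OF \<pi>(1)]] unfolding \<beta>'_def comp_def
    by blast
  moreover have "x = (\<Sum>j\<in>{1,2,3}. \<beta>' j *\<^sub>R (vtx T j + l *\<^sub>R avec nf nv \<sigma> T j))"
  proof -
    have "avec nf nv \<sigma> T0 i = avec nf nv \<sigma> T (\<pi> i)" if "i \<in> {1,2,3}" for i
      using that bij_betw_apply[OF \<pi>(1) that] \<pi>(2) by (intro avec_relabel[OF T V N n \<sigma>]) auto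
    then show ?thesis unfolding reindex \<beta>(4) using \<pi>(2) by (intro sum.cong) auto
  qed
  moreover have "s = (\<Sum>j\<in>{1,2,3}. \<beta>' j *\<^sub>R vtx T j)"
    unfolding reindex \<beta>(5) using \<pi>(2) by (intro sum.cong) auto
  ultimately show ?thesis using \<beta>(1) unfolding bip_def l_def by blast
qed

lemma bip_displacement:
  assumes "\<not> collinear (verts T)" and "bip nf nv \<sigma> T x s"
    and "sum \<alpha> {1,2,3} = 1" "s = (\<Sum>i\<in>{1,2,3}. \<alpha> i *\<^sub>R vtx T i)"
  shows "x - s = offset nf \<sigma> T x *\<^sub>R (\<Sum>i\<in>{1,2,3}. \<alpha> i *\<^sub>R avec nf nv \<sigma> T i)"
proof -
  define l where "l = offset nf \<sigma> T x"
  obtain \<beta> where \<beta>: "sum \<beta> {1,2,3} = 1"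
    "x = (\<Sum>i\<in>{1,2,3}. \<beta> i *\<^sub>R (vtx T i + l *\<^sub>R avec nf nv \<sigma> T i))"
    "s = (\<Sum>i\<in>{1,2,3}. \<beta> i *\<^sub>R vtx T i)"
    using assms(2) unfolding bip_def l_def[symmetric] by blast
  have "(\<Sum>i\<in>{1,2,3}. \<beta> i *\<^sub>R vtx T i) = (\<Sum>i\<in>{1,2,3}. \<alpha> i *\<^sub>R vtx T i)"
    using \<beta>(3) assms(4) by (rule trans[OF sym])
  then have \<beta>\<alpha>: "\<beta> i = \<alpha> i" if "i \<in> {1,2,3}" for i
    using barycentric_coords_unique[OF assms(1) \<beta>(1) assms(3)] that by blast
  have "x - s = (\<Sum>i\<in>{1,2,3}. \<beta> i *\<^sub>R (vtx T i + l *\<^sub>R avec nf nv \<sigma> T i) - \<beta> i *\<^sub>R vtx T i)"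
    unfolding \<beta>(2,3) by (rule sum_subtractf[symmetric])
  also have "\<dots> = l *\<^sub>R (\<Sum>i\<in>{1,2,3}. \<beta> i *\<^sub>R avec nf nv \<sigma> T i)"
    by (simp add: scaleR_right.sum scaleR_add_right mult.commute)
  also have "\<dots> = l *\<^sub>R (\<Sum>i\<in>{1,2,3}. \<alpha> i *\<^sub>R avec nf nv \<sigma> T i)"
    using \<beta>\<alpha> by simp
  finally show ?thesis unfolding l_def .
qed

lemma watertight_rel_interior_verts_eq:
  assumes "watertight F" "nondegenerate F" "T \<in> F" "T0 \<in> F"
    and s: "s \<in> rel_interior (tri T)" "s \<in> tri T0"
  shows "verts T0 = verts T"
proof (cases "T0 = T")
  case False
  have ncol: "\<not> collinear (verts T)" "\<not> collinear (verts T0)"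
    using assms(2-4) by (auto simp: nondegenerate_def)
  have "s \<in> tri T \<inter> tri T0" using s rel_interior_subset by blast
  then have s_common: "s \<in> convex hull (verts T \<inter> verts T0)"
    using assms(1,3,4) False unfolding watertight_def by metis
  have "verts T \<subseteq> verts T0"
  proof (rule ccontr)
    assume "\<not> verts T \<subseteq> verts T0"
    then obtain v where v: "v \<in> verts T" "v \<notin> verts T0" by blast
    then have "convex hull (verts T \<inter> verts T0) \<subseteq> convex hull (verts T - {v})"
      by (intro hull_mono) blast
    then show False
      using s_common rel_interior_simplex_not_in_facet[OF affine_independent_verts[OF ncol(1)] v(1)] s(1)
      unfolding tri_def by blast
  qed
  moreover have "finite (verts T0)" by (simp add: verts_def)
  ultimately show ?thesis
    using card_verts[OF ncol(1)] card_verts[OF ncol(2)] card_subset_eq by metis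
qed simp

lemma outward_face_normals_is_unit_normal:
  assumes "outward_face_normals F nf" "T \<in> F"
  shows "is_unit_normal (nf T) T"
  using assms by (simp add: outward_face_normals_def is_unit_normal_def)

lemma outward_normals_eq_if_verts_eq:
  assumes out: "outward_face_normals F nf" and "T \<in> F" "T0 \<in> F"
    and ncol: "\<not> collinear (verts T)" and V: "verts T0 = verts T"
  shows "nf T0 = nf T"
proof -
  have n: "is_unit_normal (nf T) T" and n0: "is_unit_normal (nf T0) T0"
    using assms outward_face_normals_is_unit_normal by blast+
  have "nf T0 \<bullet> (vtx T k - vtx T 1) = 0" if "k \<in> {2,3}" for k
    using n0 that V by (intro is_unit_normal_orthogonal_verts) (auto simp: verts_def)
  then have "nf T0 = nf T \<or> nf T0 = - nf T"
    using unit_normals_eq_or_opposite edges_cross_nonzero[OF ncol, of 1] n n0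
    by (simp add: is_unit_normal_def)
  moreover have "nf T0 \<noteq> - nf T"
    \<comment> \<open>otherwise points just off the common relative interior would be both inside and outside\<close>
  proof
    assume opp: "nf T0 = - nf T"
    have "tri T \<noteq> {}" by (simp add: tri_def verts_def)
    then obtain p where p: "p \<in> rel_interior (tri T)"
      using rel_interior_eq_empty[of "tri T"] by (auto simp: tri_def)
    have p0: "p \<in> rel_interior (tri T0)" using p V by (simp add: tri_def)
    obtain e where "e > 0" and e: "\<And>t. 0 < t \<Longrightarrow> t < e \<Longrightarrow> p + t *\<^sub>R nf T \<in> outside (msurf F)"
      using out \<open>T \<in> F\<close> p unfolding outward_face_normals_def by metis
    obtain e0 where "e0 > 0" and e0: "\<And>t. 0 < t \<Longrightarrow> t < e0 \<Longrightarrow> p - t *\<^sub>R nf T0 \<in> inside (msurf F)"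
      using out \<open>T0 \<in> F\<close> p0 unfolding outward_face_normals_def by metis
    define t where "t = min e e0 / 2"
    have "0 < t" "t < e" "t < e0" using \<open>e > 0\<close> \<open>e0 > 0\<close> by (simp_all add: t_def)
    then have "p + t *\<^sub>R nf T \<in> outside (msurf F) \<inter> inside (msurf F)"
      using e e0 opp by simp
    then show False using inside_Int_outside by blast
  qed
  ultimately show ?thesis by blast
qed

theorem lemma1:
  fixes F :: "face set" and nf :: "face \<Rightarrow> point" and nv :: "point \<Rightarrow> point"
    and x s :: point and T :: face and \<alpha> :: "nat \<Rightarrow> real"
  assumes "watertight F" and "nondegenerate F"
    and "outward_face_normals F nf" and "good_vertex_normals F nf nv"
    and "dispersed_proj_defined F nf nv"
    and "x \<notin> exceptional_set F nf nv"
    and "x \<in> outside (msurf F)"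
    and "dispersed_proj F nf nv x s"
    and "T \<in> F" and "s \<in> rel_interior (tri T)"
    and "\<forall>i\<in>{1,2,3}. \<alpha> i \<ge> 0" and "(\<Sum>i\<in>{1,2,3}. \<alpha> i) = 1"
    and "s = (\<Sum>i\<in>{1,2,3}. \<alpha> i *\<^sub>R vtx T i)"
  shows "x - s = offset nf 1 T x *\<^sub>R (\<Sum>i\<in>{1,2,3}. \<alpha> i *\<^sub>R avec nf nv 1 T i)
       \<and> (\<Sum>i\<in>{1,2,3}. \<alpha> i *\<^sub>R avec nf nv 1 T i) \<noteq> 0
       \<and> norm (x - s) > 0
       \<and> x - s = norm (x - s) *\<^sub>R
           ((\<Sum>i\<in>{1,2,3}. \<alpha> i *\<^sub>R avec nf nv 1 T i) /\<^sub>R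
             norm (\<Sum>i\<in>{1,2,3}. \<alpha> i *\<^sub>R avec nf nv 1 T i))"
proof -
  have "x \<notin> inside (msurf F)" using assms(7) inside_Int_outside[of "msurf F"] by blast
  then have "orient F x = 1" by (simp add: orient_def)
  then obtain T0 where T0: "T0 \<in> F" "bip nf nv 1 T0 x s"
    using assms(8) unfolding dispersed_proj_def by auto
  have ncol: "\<not> collinear (verts T)" using assms(2,9) by (simp add: nondegenerate_def)
  have V: "verts T0 = verts T"
    using watertight_rel_interior_verts_eq[OF assms(1,2,9) T0(1) assms(10) bip_in_tri[OF T0(2)]] .
  have "bip nf nv 1 T x s"
    using bip_relabel[OF ncol V outward_normals_eq_if_verts_eq[OF assms(3,9) T0(1) ncol V]
        outward_face_normals_is_unit_normal[OF assms(3,9)]] T0(2) by simp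
  then have disp: "x - s = offset nf 1 T x *\<^sub>R (\<Sum>i\<in>{1,2,3}. \<alpha> i *\<^sub>R avec nf nv 1 T i)"
    and "offset nf 1 T x \<ge> 0"
    using bip_displacement[OF ncol _ assms(12,13)] unfolding bip_def by blast+
  have "s \<in> msurf F"
    using assms(9,10) rel_interior_subset unfolding msurf_def by blast
  then have "x \<noteq> s" using assms(7) outside_no_overlap[of "msurf F"] by blast
  then have "x - s \<noteq> 0" by simp
  then show ?thesis
    using nonneg_scaleR_eq_norm_scaleR[OF disp \<open>offset nf 1 T x \<ge> 0\<close>] disp by auto
qed

end
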